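(* Let $\mathcal{T}$ be an MPQ-tree of an interval graph $G=(V,E)$, let $(x,y)\in E$ with $x$ over $y$ and $node(x)\neq node(y)$. If $node(y)$ is a P-node that is not a leaf of $\mathcal{T}$, then $(x,y)$ is not an interval edge.
   Context: Graphs are finite and simple; for $G=(V,E)$ and $e\in E$, $G-e=(V,E\setminus\{e\})$. An edge $(x,y)\in E$ of an interval graph $G$ is an interval edge if $G-(x,y)$ is an interval graph. An MPQ-tree of an interval graph $G=(V,E)$, $V=\{1,\dots,n\}$, is a rooted plane tree whose nodes are P-nodes and Q-nodes. Each P-node carries a (possibly empty) set of vertices. A Q-node has $k\ge 3$ ordered positions $1,\dots,k$; position $i$ carries a set $S_i\subseteq V$ (the $i$-th section) and a child subtree $T_i$, which may be empty. Every vertex $v$ is assigned to exactly one node $node(v)$: either $v$ lies in the set of the P-node $node(v)$, or $node(v)$ is a Q-node and $v$ lies exactly in the sections $S_{l(v)},\dots,S_{r(v)}$ of it, with $l(v)<r(v)$. For a node with child subtrees $T_1,\dots,T_k$, $V_i$ denotes the set of vertices assigned to nodes of $T_i$ ($V_i=\emptyset$ if $T_i$ is empty). The maximal cliques of $G$ are in bijection with the descending paths from the root which at a P-node continue into one of its children (stopping if there is none) and at a Q-node choose a position $i$ and continue into $T_i$ (stopping if $T_i$ is empty); the clique is the union of the sets of the visited P-nodes and the chosen sections. Reading these cliques left to right gives a linear order of the maximal cliques, and the orders obtained this way after arbitrarily permuting children of P-nodes and reversing the positions of Q-nodes are exactly the orders of the maximal cliques of $G$ in which the cliques containing any fixed vertex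 are consecutive. Moreover, for every Q-node with sections $S_1,\dots,S_k$: (a) $V_1\neq\emptyset$ and $V_k\ne\emptyset$; (b) $S_1\subseteq S_2$ and $S_k\subseteq S_{k-1}$; (c) $S_{i-1}\cap S_i\neq\emptyset$ for $2\le i\le k$; (d) $S_{i-1}\neq S_i$ for $2\le i\le k$; (e) $(S_i\cap S_{i+1})\setminus S_1\neq\emptyset$ and $(S_{i-1}\cap S_i)\setminus S_k\neq\emptyset$ for $2\le i\le k-1$; (f) $(S_{i-1}\cup V_{i-1})\setminus S_i\neq\emptyset$ and $(S_i\cup V_i)\setminus S_{i-1}\neq\emptyset$ for $2\le i\le k$; and further (g) no empty P-node has an empty P-node as its parent, (h) no P-node has exactly one child whose root is a P-node, (i) every child subtree of a P-node is nonempty. We say $x$ is over $y$ if $node(x)$ is the lowest common ancestor of $node(x)$ and $node(y)$ in $\mathcal{T}$. *)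

theory Defs
  imports Complex_Main "HOL-Library.Multiset"
begin

definition simple_graph :: "nat set \<Rightarrow> nat set set \<Rightarrow> bool" where
  "simple_graph V E \<longleftrightarrow> finite V \<and> E \<subseteq> {{u, v} | u v. u \<in> V \<and> v \<in> V \<and> u \<noteq> v}"

definition interval_graph :: "nat set \<Rightarrow> nat set set \<Rightarrow> bool" where
  "interval_graph V E \<longleftrightarrow> simple_graph V E \<and>
     (\<exists>l r :: nat \<Rightarrow> real. (\<forall>v\<in>V. l v \<le> r v) \<and>
        (\<forall>u\<in>V. \<forall>v\<in>V. u \<noteq> v \<longrightarrow>
            ({u, v} \<in> E \<longleftrightarrow> max (l u) (l v) \<le> min (r u) (r v))))"

definition interval_edge :: "nat set \<Rightarrow> nat set set \<Rightarrow> nat \<Rightarrow> nat \<Rightarrow> bool" where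
  "interval_edge V E x y \<longleftrightarrow> {x, y} \<in> E \<and> interval_graph V (E - {{x, y}})"

definition is_clique :: "nat set \<Rightarrow> nat set set \<Rightarrow> nat set \<Rightarrow> bool" where
  "is_clique V E C \<longleftrightarrow> C \<subseteq> V \<and> (\<forall>u\<in>C. \<forall>v\<in>C. u \<noteq> v \<longrightarrow> {u, v} \<in> E)"

definition max_clique :: "nat set \<Rightarrow> nat set set \<Rightarrow> nat set \<Rightarrow> bool" where
  "max_clique V E C \<longleftrightarrow> is_clique V E C \<and> (\<forall>D. is_clique V E D \<and> C \<subseteq> D \<longrightarrow> D = C)"

definition consecutive_clique_order :: "nat set \<Rightarrow> nat set set \<Rightarrow> nat set list \<Rightarrow> bool" where
  "consecutive_clique_order V E L \<longleftrightarrow> distinct L \<and> set L = {C. max_clique V E C} \<and>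
     (\<forall>v i j k. i \<le> j \<and> j \<le> k \<and> k < length L \<and> v \<in> L ! i \<and> v \<in> L ! k \<longrightarrow> v \<in> L ! j)"

text \<open>Empty stands for an empty (child) subtree. A P-node carries a vertex set and its
  list of children; a Q-node carries its list of positions, each being a section S_i together
  with the child subtree T_i (possibly Empty).\<close>
datatype mpq = Empty | PN "nat set" "mpq list" | QN "(nat set \<times> mpq) list"

fun child :: "mpq \<Rightarrow> nat \<Rightarrow> mpq" where
  "child Empty i = Empty"
| "child (PN S cs) i = (if i < length cs then cs ! i else Empty)"
| "child (QN secs) i = (if i < length secs then snd (secs ! i) else Empty)"

text \<open>Nodes are addressed by paths (lists of child positions) from the root.\<close>
fun sub :: "mpq \<Rightarrow> nat list \<Rightarrow> mpq" where
  "sub t [] = t"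
| "sub t (i # p) = sub (child t i) p"

fun labels :: "mpq \<Rightarrow> nat set" where
  "labels Empty = {}"
| "labels (PN S cs) = S \<union> \<Union> (labels ` set cs)"
| "labels (QN secs) = \<Union> ((\<lambda>p. fst p \<union> labels (snd p)) ` set secs)"

text \<open>The left-to-right list of cliques given by the descending paths.\<close>
fun cliques :: "mpq \<Rightarrow> nat set list" where
  "cliques Empty = []"
| "cliques (PN S cs) = (if cs = [] then [S] else concat (map (\<lambda>c. map ((\<union>) S) (cliques c)) cs))"
| "cliques (QN secs) = concat (map (\<lambda>p. if snd p = Empty then [fst p]
                                        else map ((\<union>) (fst p)) (cliques (snd p))) secs)"

inductive tree_equiv :: "mpq \<Rightarrow> mpq \<Rightarrow> bool" where
  "tree_equiv Empty Empty"
| "list_all2 tree_equiv cs ds \<Longrightarrow> mset es = mset ds \<Longrightarrow> tree_equiv (PN S cs) (PN S es)"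
| "list_all2 (\<lambda>a b. fst a = fst b \<and> tree_equiv (snd a) (snd b)) secs secs'
     \<Longrightarrow> tree_equiv (QN secs) (QN secs')"
| "list_all2 (\<lambda>a b. fst a = fst b \<and> tree_equiv (snd a) (snd b)) secs secs'
     \<Longrightarrow> tree_equiv (QN secs) (QN (rev secs'))"

definition occurs :: "mpq \<Rightarrow> nat \<Rightarrow> nat list \<Rightarrow> bool" where
  "occurs t v p \<longleftrightarrow> (case sub t p of
       Empty \<Rightarrow> False
     | PN S cs \<Rightarrow> v \<in> S
     | QN secs \<Rightarrow> (\<exists>i < length secs. v \<in> fst (secs ! i)))"

definition node :: "mpq \<Rightarrow> nat \<Rightarrow> nat list" where
  "node t v = (THE p. occurs t v p)"

text \<open>x is over y: node(x) is the lowest common ancestor of node(x) and node(y), i.e.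
  node(x) is an ancestor of (or equal to) node(y).\<close>
definition over :: "mpq \<Rightarrow> nat \<Rightarrow> nat \<Rightarrow> bool" where
  "over t x y \<longleftrightarrow> (\<exists>q. node t y = node t x @ q)"

definition is_PN :: "mpq \<Rightarrow> bool" where
  "is_PN t \<longleftrightarrow> (\<exists>S cs. t = PN S cs)"

text \<open>Conditions (a)-(f) on a Q-node (0-indexed positions 0..k-1).\<close>
definition Q_conditions :: "(nat set \<times> mpq) list \<Rightarrow> bool" where
  "Q_conditions secs \<longleftrightarrow> (let k = length secs; S = (\<lambda>i. fst (secs ! i));
       W = (\<lambda>i. labels (snd (secs ! i))) in
     k \<ge> 3 \<and>
     W 0 \<noteq> {} \<and> W (k - 1) \<noteq> {} \<and>
     S 0 \<subseteq> S 1 \<and> S (k - 1) \<subseteq> S (k - 2) \<and>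
     (\<forall>i. 1 \<le> i \<and> i < k \<longrightarrow> S (i - 1) \<inter> S i \<noteq> {}) \<and>
     (\<forall>i. 1 \<le> i \<and> i < k \<longrightarrow> S (i - 1) \<noteq> S i) \<and>
     (\<forall>i. 1 \<le> i \<and> i \<le> k - 2 \<longrightarrow>
          (S i \<inter> S (i + 1)) - S 0 \<noteq> {} \<and> (S (i - 1) \<inter> S i) - S (k - 1) \<noteq> {}) \<and>
     (\<forall>i. 1 \<le> i \<and> i < k \<longrightarrow>
          (S (i - 1) \<union> W (i - 1)) - S i \<noteq> {} \<and> (S i \<union> W i) - S (i - 1) \<noteq> {}))"

definition P_conditions :: "nat set \<Rightarrow> mpq list \<Rightarrow> bool" where
  "P_conditions S cs \<longleftrightarrow>
     (S = {} \<longrightarrow> (\<forall>c\<in>set cs. \<forall>cs'. c \<noteq> PN {} cs')) \<and>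
     \<not> (\<exists>c. cs = [c] \<and> is_PN c) \<and>
     (\<forall>c\<in>set cs. c \<noteq> Empty)"

definition is_MPQ_tree :: "nat set \<Rightarrow> nat set set \<Rightarrow> mpq \<Rightarrow> bool" where
  "is_MPQ_tree V E t \<longleftrightarrow>
     t \<noteq> Empty \<and>
     \<comment> \<open>every vertex is assigned to exactly one node; in a Q-node it lies exactly in
         sections l(v),...,r(v) with l(v) < r(v)\<close>
     (\<forall>v\<in>V. (\<exists>!p. occurs t v p) \<and>
        (\<forall>p secs. occurs t v p \<and> sub t p = QN secs \<longrightarrow>
           (\<exists>l r. l < r \<and> {i. i < length secs \<and> v \<in> fst (secs ! i)} = {l..r}))) \<and>
     \<comment> \<open>bijection between descending paths and maximal cliques\<close>
     distinct (cliques t) \<and> set (cliques t) = {C. max_clique V E C} \<and>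
     \<comment> \<open>the orders generated by the tree are exactly the consecutive clique orders\<close>
     {cliques t' | t'. tree_equiv t t'} = {L. consecutive_clique_order V E L} \<and>
     \<comment> \<open>structural conditions (a)-(i)\<close>
     (\<forall>p secs. sub t p = QN secs \<longrightarrow> Q_conditions secs) \<and>
     (\<forall>p S cs. sub t p = PN S cs \<longrightarrow> P_conditions S cs)"

end

theory Submission
  imports Defs "HOL-Library.Sublist"
begin

text \<open>Every maximal clique whose descending path passes below node(y) contains x as well as y,
  because x lies in the section of node(x) leading towards y. Below the internal P-node node(y)
  there are two subtrees at different positions of one node: two children, or by (h) the two end
  positions of its only child, a Q-node, which are nonempty by (a). Vertices a, b taken from
  these subtrees lie on no common descending path, so they are nonadjacent common neighbours of
  x and y. After deleting the edge xy, the cycle a x b y is chordless, and no interval graph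
  contains a chordless 4-cycle.\<close>

text \<open>The descending paths of the paper, as lists of child positions, with their cliques.\<close>
inductive clique_path :: "mpq \<Rightarrow> nat list \<Rightarrow> nat set \<Rightarrow> bool" where
  P_leaf: "clique_path (PN S []) [] S"
| P_child: "i < length cs \<Longrightarrow> clique_path (cs ! i) P D
    \<Longrightarrow> clique_path (PN S cs) (i # P) (S \<union> D)"
| Q_stop: "i < length secs \<Longrightarrow> snd (secs ! i) = Empty
    \<Longrightarrow> clique_path (QN secs) [i] (fst (secs ! i))"
| Q_child: "i < length secs \<Longrightarrow> clique_path (snd (secs ! i)) P D
    \<Longrightarrow> clique_path (QN secs) (i # P) (fst (secs ! i) \<union> D)"

fun node_set :: "mpq \<Rightarrow> nat \<Rightarrow> nat set" where
  "node_set Empty j = {}"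
| "node_set (PN S cs) j = S"
| "node_set (QN secs) j = fst (secs ! j)"

text \<open>The hereditary part of (i) and of k \<ge> 3 that lets every partial path be completed.\<close>
definition wf_mpq :: "mpq \<Rightarrow> bool" where
  "wf_mpq t \<longleftrightarrow> (\<forall>p S cs. sub t p = PN S cs \<longrightarrow> Empty \<notin> set cs) \<and>
                 (\<forall>p secs. sub t p = QN secs \<longrightarrow> secs \<noteq> [])"

lemma sub_Empty [simp]: "sub Empty p = Empty"
  by (induction p) auto

lemma sub_append: "sub t (p @ q) = sub (sub t p) q"
  by (induction p arbitrary: t) auto

lemma occurs_append: "occurs t v (p @ q) \<longleftrightarrow> occurs (sub t p) v q"
  unfolding occurs_def by (simp add: sub_append)

lemma occurs_Cons [simp]: "occurs t v (i # q) \<longleftrightarrow> occurs (child t i) v q"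
  unfolding occurs_def by simp

lemma wf_mpq_sub: "wf_mpq t \<Longrightarrow> wf_mpq (sub t p)"
  unfolding wf_mpq_def by (metis sub_append)

lemma wf_mpq_child: "wf_mpq t \<Longrightarrow> wf_mpq (child t i)"
  using wf_mpq_sub[of t "[i]"] by simp

lemma wf_mpq_PN_child: "wf_mpq (PN S cs) \<Longrightarrow> i < length cs \<Longrightarrow> cs ! i \<noteq> Empty"
  unfolding wf_mpq_def by (metis nth_mem sub.simps(1))

lemma wf_mpq_QN: "wf_mpq (QN secs) \<Longrightarrow> secs \<noteq> []"
  unfolding wf_mpq_def by (metis sub.simps(1))

lemma not_clique_path_Empty [simp]: "\<not> clique_path Empty P C"
  by (auto elim: clique_path.cases)

lemma clique_path_in_cliques: "clique_path t P C \<Longrightarrow> C \<in> set (cliques t)"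
proof (induction rule: clique_path.induct)
  case (P_child i cs P D S)
  then have "cs ! i \<in> set cs" "cs \<noteq> []" by auto
  with P_child.IH show ?case by auto
next
  case (Q_stop i secs)
  then have "secs ! i \<in> set secs" by simp
  with Q_stop.hyps show ?case by force
next
  case (Q_child i secs P D)
  then have "secs ! i \<in> set secs" "snd (secs ! i) \<noteq> Empty" by auto
  with Q_child.IH show ?case by force
qed simp

lemma set_cliques_iff: "C \<in> set (cliques t) \<longleftrightarrow> (\<exists>P. clique_path t P C)"
proof
  show "C \<in> set (cliques t) \<Longrightarrow> \<exists>P. clique_path t P C"
  proof (induction t arbitrary: C)
    case (PN S cs)
    show ?case
    proof (cases "cs = []")
      case False
      with PN.prems obtain c D where c: "c \<in> set cs" "D \<in> set (cliques c)" "C = S \<union> D"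
        by auto
      then obtain i where i: "i < length cs" "cs ! i = c" by (meson in_set_conv_nth)
      from PN.IH[OF c(1,2)] obtain P where "clique_path c P D" ..
      with i have "clique_path (PN S cs) (i # P) (S \<union> D)" using clique_path.P_child by blast
      with c(3) show ?thesis by blast
    qed (use PN.prems clique_path.P_leaf in auto)
  next
    case (QN secs)
    then obtain s where s: "s \<in> set secs" and
      C: "C \<in> set (if snd s = Empty then [fst s] else map ((\<union>) (fst s)) (cliques (snd s)))"
      by auto
    then obtain i where i: "i < length secs" "secs ! i = s" by (meson in_set_conv_nth)
    show ?case
    proof (cases "snd s = Empty")
      case True
      with C i have "clique_path (QN secs) [i] C" using clique_path.Q_stop by auto
      then show ?thesis ..
    next
      case False
      with C obtain D where D: "D \<in> set (cliques (snd s))" "C = fst s \<union> D" by auto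
      have "snd s \<in> Basic_BNFs.snds s" by (cases s) auto
      from QN.IH[OF s this D(1)] obtain P where "clique_path (snd s) P D" ..
      with i have "clique_path (QN secs) (i # P) (fst s \<union> D)" using clique_path.Q_child by blast
      with D(2) show ?thesis by blast
    qed
  qed simp
qed (use clique_path_in_cliques in blast)

lemma labels_QN_position:
  assumes "i < length secs"
  shows "fst (secs ! i) \<union> labels (snd (secs ! i)) \<subseteq> labels (QN secs)"
proof -
  from assms have "secs ! i \<in> set secs" by simp
  then show ?thesis by auto
qed

lemma clique_path_labels: "clique_path t P C \<Longrightarrow> C \<subseteq> labels t"
proof (induction rule: clique_path.induct)
  case (P_child i cs P D S)
  then have "labels (cs ! i) \<subseteq> labels (PN S cs)" by auto
  with P_child show ?case by auto
next
  case (Q_stop i secs)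
  then show ?case using labels_QN_position by auto
next
  case (Q_child i secs P D)
  then show ?case using labels_QN_position[of i secs] by auto
qed simp

lemma wf_mpq_clique_path_exists: "wf_mpq t \<Longrightarrow> t \<noteq> Empty \<Longrightarrow> \<exists>P C. clique_path t P C"
proof (induction t)
  case (PN S cs)
  show ?case
  proof (cases cs)
    case Nil
    then show ?thesis using clique_path.P_leaf by blast
  next
    case (Cons c cs')
    with PN.prems have "c \<noteq> Empty" "wf_mpq c"
      using wf_mpq_PN_child[of S cs 0] wf_mpq_child[of "PN S cs" 0] by auto
    then obtain P C where "clique_path c P C" using PN.IH[of c] Cons by auto
    then have "clique_path (PN S cs) (0 # P) (S \<union> C)"
      using Cons clique_path.P_child[of 0 cs] by simp
    then show ?thesis by blast
  qed
next
  case (QN secs)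
  then have ne: "secs \<noteq> []" by (simp add: wf_mpq_QN)
  show ?case
  proof (cases "snd (secs ! 0) = Empty")
    case True
    with ne show ?thesis using clique_path.Q_stop[of 0 secs] by auto
  next
    case False
    have "wf_mpq (snd (secs ! 0))" using wf_mpq_child[OF QN.prems(1), of 0] ne by simp
    moreover have "snd (secs ! 0) \<in> Basic_BNFs.snds (secs ! 0)" by (cases "secs ! 0") auto
    moreover have "secs ! 0 \<in> set secs" using ne by simp
    ultimately obtain P C where "clique_path (snd (secs ! 0)) P C"
      using QN.IH[of "secs ! 0"] ne False by blast
    with ne show ?thesis using clique_path.Q_child[of 0 secs] by auto
  qed
qed simp

lemma clique_path_through_root:
  assumes "wf_mpq t" and "occurs t v []"
  shows "\<exists>P C. clique_path t P C \<and> v \<in> C"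
proof (cases t)
  case (PN S cs)
  with assms have v: "v \<in> S" by (simp add: occurs_def)
  show ?thesis
  proof (cases cs)
    case Nil
    with PN v show ?thesis using clique_path.P_leaf by blast
  next
    case (Cons c cs')
    with PN assms(1) have "cs ! 0 \<noteq> Empty" "wf_mpq (cs ! 0)"
      using wf_mpq_PN_child[of S cs 0] wf_mpq_child[of t 0] by auto
    then obtain P C where "clique_path (cs ! 0) P C" using wf_mpq_clique_path_exists by blast
    then have "clique_path t (0 # P) (S \<union> C)" using PN Cons clique_path.P_child[of 0 cs] by simp
    with v show ?thesis by blast
  qed
next
  case (QN secs)
  with assms obtain i where i: "i < length secs" "v \<in> fst (secs ! i)" by (auto simp: occurs_def)
  show ?thesis
  proof (cases "snd (secs ! i) = Empty")
    case True
    with QN i show ?thesis using clique_path.Q_stop[of i secs] by auto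
  next
    case False
    moreover have "wf_mpq (snd (secs ! i))" using wf_mpq_child[OF assms(1), of i] QN i by simp
    ultimately obtain P C where "clique_path (snd (secs ! i)) P C"
      using wf_mpq_clique_path_exists by blast
    with QN i show ?thesis using clique_path.Q_child[of i secs] by auto
  qed
qed (use assms in \<open>simp add: occurs_def\<close>)

lemma clique_path_sub: "clique_path (sub t p) P C \<Longrightarrow> \<exists>A. clique_path t (p @ P) (A \<union> C)"
proof (induction p arbitrary: t)
  case Nil
  then show ?case by (metis Un_empty_left append_Nil sub.simps(1))
next
  case (Cons i p)
  then obtain A where A: "clique_path (child t i) (p @ P) (A \<union> C)" by auto
  show ?case
  proof (cases t)
    case (PN S cs)
    with A have "i < length cs" by (cases "i < length cs") auto
    with PN A have "clique_path t (i # p @ P) (S \<union> (A \<union> C))" by (simp add: clique_path.P_child)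
    then show ?thesis by (metis Un_assoc append_Cons)
  next
    case (QN secs)
    with A have "i < length secs" by (cases "i < length secs") auto
    with QN A have "clique_path t (i # p @ P) (fst (secs ! i) \<union> (A \<union> C))"
      by (simp add: clique_path.Q_child)
    then show ?thesis by (metis Un_assoc append_Cons)
  qed (use A in simp)
qed

lemma clique_path_through:
  assumes "wf_mpq t" and "occurs t v p"
  shows "\<exists>P C. clique_path t (p @ P) C \<and> v \<in> C"
proof -
  from assms have "wf_mpq (sub t p)" "occurs (sub t p) v []"
    using wf_mpq_sub occurs_append[of t v p "[]"] by auto
  then obtain P C where "clique_path (sub t p) P C" "v \<in> C"
    using clique_path_through_root by blast
  then show ?thesis using clique_path_sub by blast
qed

lemma labels_occurs: "v \<in> labels t \<Longrightarrow> \<exists>p. occurs t v p"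
proof (induction t)
  case (PN S cs)
  show ?case
  proof (cases "v \<in> S")
    case True
    then have "occurs (PN S cs) v []" by (simp add: occurs_def)
    then show ?thesis by blast
  next
    case False
    with PN.prems obtain c where c: "c \<in> set cs" "v \<in> labels c" by auto
    then obtain i where "i < length cs" "cs ! i = c" by (meson in_set_conv_nth)
    with PN.IH c have "\<exists>p. occurs (PN S cs) v (i # p)" by auto
    then show ?thesis by blast
  qed
next
  case (QN secs)
  then obtain s where s: "s \<in> set secs" "v \<in> fst s \<or> v \<in> labels (snd s)" by auto
  then obtain i where i: "i < length secs" "secs ! i = s" by (meson in_set_conv_nth)
  show ?case
  proof (cases "v \<in> fst s")
    case True
    with i have "occurs (QN secs) v []" by (auto simp: occurs_def)
    then show ?thesis by blast
  next
    case False
    have "snd s \<in> Basic_BNFs.snds s" by (cases s) auto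
    with QN.IH s False i have "\<exists>p. occurs (QN secs) v (i # p)" by auto
    then show ?thesis by blast
  qed
qed simp

lemma clique_path_member_occurs:
  "clique_path t P C \<Longrightarrow> v \<in> C \<Longrightarrow>
    \<exists>p. prefix p P \<and> occurs t v p \<and> v \<in> node_set (sub t p) (P ! length p)"
proof (induction rule: clique_path.induct)
  case (P_child i cs P D S)
  show ?case
  proof (cases "v \<in> S")
    case True
    then show ?thesis by (intro exI[of _ "[]"]) (simp add: occurs_def)
  next
    case False
    with P_child obtain p where
      "prefix p P" "occurs (cs ! i) v p" "v \<in> node_set (sub (cs ! i) p) (P ! length p)"
      by auto
    with P_child.hyps show ?thesis by (intro exI[of _ "i # p"]) simp
  qed
next
  case (Q_child i secs P D)
  show ?case
  proof (cases "v \<in> fst (secs ! i)")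
    case True
    with Q_child.hyps show ?thesis by (intro exI[of _ "[]"]) (auto simp: occurs_def)
  next
    case False
    with Q_child obtain p where "prefix p P" "occurs (snd (secs ! i)) v p"
      "v \<in> node_set (sub (snd (secs ! i)) p) (P ! length p)"
      by auto
    with Q_child.hyps show ?thesis by (intro exI[of _ "i # p"]) simp
  qed
qed (auto simp: occurs_def intro!: exI[of _ "[]"])

lemma clique_path_node_set:
  "clique_path t P C \<Longrightarrow> prefix p P \<Longrightarrow> node_set (sub t p) (P ! length p) \<subseteq> C"
proof (induction arbitrary: p rule: clique_path.induct)
  case (P_child i cs P D S)
  then show ?case by (cases p) auto
next
  case (Q_stop i secs)
  then show ?case by (cases p) auto
next
  case (Q_child i secs P D)
  then show ?case by (cases p) auto
qed simp

lemma concat_map_split_nth: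
  assumes "i < length xs"
  shows "concat (map f xs) = concat (map f (take i xs)) @ f (xs ! i) @ concat (map f (drop (Suc i) xs))"
proof -
  have "concat (map f xs) = concat (map f (take i xs @ xs ! i # drop (Suc i) xs))"
    by (simp only: id_take_nth_drop[OF assms, symmetric])
  then show ?thesis by simp
qed

lemma distinct_concat_map_disjoint:
  assumes "distinct (concat (map h xs))" and "i < length xs" and "j < length xs" and "i \<noteq> j"
  shows "set (h (xs ! i)) \<inter> set (h (xs ! j)) = {}"
proof -
  have "set (h (xs ! i)) \<inter> set (h (xs ! j)) = {}" if "i < j" "j < length xs" for i j
  proof -
    from that have "xs ! i \<in> set (take j xs)"
      by (metis in_set_conv_nth length_take min.absorb4 nth_take)
    then have "set (h (xs ! i)) \<subseteq> set (concat (map h (take j xs)))" by auto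
    moreover from assms(1) have
      "distinct (concat (map h (take j xs)) @ h (xs ! j) @ concat (map h (drop (Suc j) xs)))"
      by (simp only: concat_map_split_nth[OF that(2), of h, symmetric])
    then have "set (concat (map h (take j xs))) \<inter> set (h (xs ! j)) = {}"
      by (simp only: distinct_append set_append) blast
    ultimately show ?thesis by blast
  qed
  with assms(2-4) show ?thesis by (metis Int_commute linorder_neqE_nat)
qed

lemma cliques_child_infix:
  assumes "child t i \<noteq> Empty"
  shows "\<exists>B us vs. cliques t = us @ map ((\<union>) B) (cliques (child t i)) @ vs"
proof (cases t)
  case (PN S cs)
  with assms have i: "i < length cs" by (auto split: if_splits)
  let ?f = "\<lambda>c. map ((\<union>) S) (cliques c)"
  from i PN have
    "cliques t = concat (map ?f (take i cs)) @ ?f (child t i) @ concat (map ?f (drop (Suc i) cs))"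
    using concat_map_split_nth[OF i, of ?f] by auto
  then show ?thesis by blast
next
  case (QN secs)
  with assms have i: "i < length secs" by (auto split: if_splits)
  let ?f = "\<lambda>p. if snd p = Empty then [fst p] else map ((\<union>) (fst p)) (cliques (snd p))"
  from i QN assms have "cliques t = concat (map ?f (take i secs))
      @ map ((\<union>) (fst (secs ! i))) (cliques (child t i)) @ concat (map ?f (drop (Suc i) secs))"
    using concat_map_split_nth[OF i, of ?f] by auto
  then show ?thesis by blast
qed (use assms in simp)

lemma cliques_sub_infix:
  "sub t p \<noteq> Empty \<Longrightarrow> \<exists>A us vs. cliques t = us @ map ((\<union>) A) (cliques (sub t p)) @ vs"
proof (induction p arbitrary: t)
  case Nil
  have "cliques t = [] @ map ((\<union>) {}) (cliques (sub t [])) @ []" by (simp add: map_idI)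
  then show ?case by blast
next
  case (Cons i p)
  from Cons.prems have "sub (child t i) p \<noteq> Empty" by simp
  then obtain A us vs where
    IH: "cliques (child t i) = us @ map ((\<union>) A) (cliques (sub t (i # p))) @ vs"
    using Cons.IH by (metis sub.simps(2))
  from Cons.prems have "child t i \<noteq> Empty" by (metis sub.simps sub_Empty)
  then obtain B us' vs' where "cliques t = us' @ map ((\<union>) B) (cliques (child t i)) @ vs'"
    using cliques_child_infix by blast
  with IH have "cliques t = (us' @ map ((\<union>) B) us)
      @ map ((\<union>) (B \<union> A)) (cliques (sub t (i # p))) @ (map ((\<union>) B) vs @ vs')"
    by (simp add: Un_assoc comp_def)
  then show ?case by blast
qed

lemma max_clique_containing:
  assumes "finite V" and "is_clique V E K"
  shows "\<exists>C. max_clique V E C \<and> K \<subseteq> C"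
proof -
  let ?M = "{D. is_clique V E D \<and> K \<subseteq> D}"
  have "?M \<subseteq> Pow V" by (auto simp: is_clique_def)
  with assms have "finite ?M" by (meson finite_Pow_iff finite_subset)
  moreover have "K \<in> ?M" using assms by auto
  ultimately obtain C where "C \<in> ?M" "\<forall>D\<in>?M. C \<subseteq> D \<longrightarrow> C = D"
    using finite_has_maximal2[of ?M K] by blast
  then show ?thesis unfolding max_clique_def by blast
qed

lemma intervals_four_cycle:
  fixes la ra lb rb lx rx ly ry :: real
  assumes "max la lx \<le> min ra rx" "max la ly \<le> min ra ry"
    "max lb lx \<le> min rb rx" "max lb ly \<le> min rb ry"
  shows "max lx ly \<le> min rx ry \<or> max la lb \<le> min ra rb"
  using assms by (simp only: max.bounded_iff min.bounded_iff) argo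

lemma interval_graph_no_induced_C4:
  assumes "interval_graph V E"
    and "a \<in> V" "b \<in> V" "x \<in> V" "y \<in> V" "a \<noteq> b" "x \<noteq> y"
    and "a \<noteq> x" "a \<noteq> y" "b \<noteq> x" "b \<noteq> y"
    and "{a, x} \<in> E" "{a, y} \<in> E" "{b, x} \<in> E" "{b, y} \<in> E"
  shows "{x, y} \<in> E \<or> {a, b} \<in> E"
proof -
  from assms(1) obtain l r :: "nat \<Rightarrow> real" where
    lr: "\<forall>u\<in>V. \<forall>v\<in>V. u \<noteq> v \<longrightarrow> ({u, v} \<in> E \<longleftrightarrow> max (l u) (l v) \<le> min (r u) (r v))"
    unfolding interval_graph_def by blast
  with assms(2-) have "max (l a) (l x) \<le> min (r a) (r x)" "max (l a) (l y) \<le> min (r a) (r y)"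
    "max (l b) (l x) \<le> min (r b) (r x)" "max (l b) (l y) \<le> min (r b) (r y)"
    by meson+
  then have "max (l x) (l y) \<le> min (r x) (r y) \<or> max (l a) (l b) \<le> min (r a) (r b)"
    by (rule intervals_four_cycle)
  with lr assms(2-7) show ?thesis by blast
qed

lemma simple_graph_edge:
  "simple_graph V E \<Longrightarrow> {x, y} \<in> E \<Longrightarrow> x \<in> V \<and> y \<in> V \<and> x \<noteq> y"
  unfolding simple_graph_def by (auto simp: doubleton_eq_iff)

locale mpq_tree =
  fixes V :: "nat set" and E :: "nat set set" and t :: mpq
  assumes is_mpq: "is_MPQ_tree V E t"
    and finite_V: "finite V"
begin

lemma node_unique: "v \<in> V \<Longrightarrow> \<exists>!p. occurs t v p"
  using is_mpq unfolding is_MPQ_tree_def by (elim conjE) (drule (1) bspec, erule conjunct1)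

lemma occurs_node: "v \<in> V \<Longrightarrow> occurs t v (node t v)"
  unfolding node_def by (rule theI'[OF node_unique])

lemma node_eqI: "v \<in> V \<Longrightarrow> occurs t v p \<Longrightarrow> node t v = p"
  unfolding node_def by (rule the1_equality[OF node_unique])

lemma set_cliques: "set (cliques t) = {C. max_clique V E C}"
  using is_mpq unfolding is_MPQ_tree_def by (elim conjE) assumption

lemma distinct_cliques: "distinct (cliques t)"
  using is_mpq unfolding is_MPQ_tree_def by (elim conjE) assumption

lemma P_conditions_sub: "sub t p = PN S cs \<Longrightarrow> P_conditions S cs"
  using is_mpq unfolding is_MPQ_tree_def by (elim conjE) fast

lemma Q_conditions_sub: "sub t p = QN secs \<Longrightarrow> Q_conditions secs"
  using is_mpq unfolding is_MPQ_tree_def by (elim conjE) fast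

lemma wf_mpq: "wf_mpq t"
  unfolding wf_mpq_def
proof (intro conjI allI impI)
  fix p S cs
  assume "sub t p = PN S cs"
  then show "Empty \<notin> set cs" using P_conditions_sub unfolding P_conditions_def by blast
next
  fix p secs
  assume "sub t p = QN secs"
  then show "secs \<noteq> []" using Q_conditions_sub unfolding Q_conditions_def Let_def by fastforce
qed

lemma clique_path_max_clique: "clique_path t P C \<Longrightarrow> max_clique V E C"
  using clique_path_in_cliques set_cliques by blast

lemma clique_path_edge:
  assumes "clique_path t P C" and "u \<in> C" and "v \<in> C" and "u \<noteq> v"
  shows "{u, v} \<in> E"
  using clique_path_max_clique[OF assms(1)] assms(2-)
  unfolding max_clique_def is_clique_def by blast

lemma clique_path_vertex: "clique_path t P C \<Longrightarrow> v \<in> C \<Longrightarrow> v \<in> V"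
  using clique_path_max_clique unfolding max_clique_def is_clique_def by blast

lemma edge_clique_path:
  assumes "u \<in> V" and "v \<in> V" and "u \<noteq> v" and "{u, v} \<in> E"
  shows "\<exists>P C. clique_path t P C \<and> u \<in> C \<and> v \<in> C"
proof -
  have "{v, u} = {u, v}" by (rule insert_commute)
  with assms have "is_clique V E {u, v}" by (auto simp: is_clique_def)
  then obtain C where "max_clique V E C" "{u, v} \<subseteq> C"
    using max_clique_containing[OF finite_V] by blast
  then have "C \<in> set (cliques t)" using set_cliques by blast
  then obtain P where "clique_path t P C" unfolding set_cliques_iff ..
  with \<open>{u, v} \<subseteq> C\<close> have "clique_path t P C \<and> u \<in> C \<and> v \<in> C" by simp
  then show ?thesis by blast
qed

lemma clique_path_node_prefix:
  assumes "clique_path t P C" and "v \<in> C"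
  shows "prefix (node t v) P \<and> v \<in> node_set (sub t (node t v)) (P ! length (node t v))"
proof -
  from clique_path_member_occurs[OF assms] obtain p where
    "prefix p P" "occurs t v p" "v \<in> node_set (sub t p) (P ! length p)" by blast
  moreover have "node t v = p" using node_eqI clique_path_vertex assms \<open>occurs t v p\<close> by blast
  ultimately show ?thesis by simp
qed

lemma nonadjacent_below_distinct_children:
  assumes "u \<in> V" and "v \<in> V"
    and "node t u = p @ i # qu" and "node t v = p @ j # qv" and "i \<noteq> j"
  shows "{u, v} \<notin> E"
proof
  assume "{u, v} \<in> E"
  moreover have "u \<noteq> v" using assms(3-5) by auto
  ultimately obtain P C where P: "clique_path t P C" "u \<in> C" "v \<in> C"
    using edge_clique_path assms(1,2) by blast
  have "prefix (node t u) P" "prefix (node t v) P"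
    using clique_path_node_prefix[OF P(1)] P(2,3) by blast+
  moreover have "prefix (p @ [i]) (node t u)" "prefix (p @ [j]) (node t v)"
    using assms(3,4) by simp_all
  ultimately have "prefix (p @ [i]) P" "prefix (p @ [j]) P"
    using prefix_order.trans by blast+
  from prefix_same_cases[OF this] assms(5) show False by auto
qed

lemma over_edge_in_section:
  assumes "x \<in> V" and "y \<in> V" and "x \<noteq> y" and "{x, y} \<in> E"
    and "node t y = node t x @ i # q"
  shows "x \<in> node_set (sub t (node t x)) i"
proof -
  obtain P C where P: "clique_path t P C" "x \<in> C" "y \<in> C"
    using edge_clique_path assms(1-4) by blast
  then have "prefix (node t x @ i # q) P" using clique_path_node_prefix assms(5) by metis
  then have "P ! length (node t x) = i" by (auto simp: prefix_def nth_append)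
  with clique_path_node_prefix[OF P(1,2)] show ?thesis by simp
qed

lemma clique_path_below_P_node_contains_over_edge:
  assumes "x \<in> V" and "y \<in> V" and "x \<noteq> y" and "{x, y} \<in> E"
    and "node t y = node t x @ i # q" and "sub t (node t y) = PN S cs"
    and P: "clique_path t (node t y @ j # P) C"
  shows "x \<in> C \<and> y \<in> C"
proof
  have "prefix (node t x) (node t y @ j # P)" "(node t y @ j # P) ! length (node t x) = i"
    using assms(5) by (auto simp: nth_append)
  then show "x \<in> C"
    using clique_path_node_set[OF P] over_edge_in_section[OF assms(1-5)] by auto
  have "y \<in> S" using occurs_node[OF assms(2)] assms(6) by (simp add: occurs_def)
  then show "y \<in> C" using clique_path_node_set[OF P, of "node t y"] assms(6) by auto
qed

lemma common_neighbour_below_P_node: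
  assumes "x \<in> V" and "y \<in> V" and "x \<noteq> y" and "{x, y} \<in> E"
    and "node t y = node t x @ i # q" and "sub t (node t y) = PN S cs"
    and "occurs t v (node t y @ r)" and "r \<noteq> []"
  shows "v \<in> V \<and> node t v = node t y @ r \<and> {v, x} \<in> E \<and> {v, y} \<in> E"
proof -
  from assms(8) obtain j r' where r: "r = j # r'" by (cases r) auto
  obtain P C where P: "clique_path t (node t y @ j # r' @ P) C" "v \<in> C"
    using clique_path_through[OF wf_mpq assms(7)] r by auto
  have v: "v \<in> V" using clique_path_vertex P by blast
  have nv: "node t v = node t y @ r" using node_eqI[OF v assms(7)] .
  have "x \<in> C \<and> y \<in> C"
    using clique_path_below_P_node_contains_over_edge[OF assms(1-6) P(1)] .
  moreover have "v \<noteq> x" "v \<noteq> y" using nv assms(5,8) by auto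
  ultimately show ?thesis using v nv P clique_path_edge by blast
qed

text \<open>A child of an internal P-node cannot carry only the empty clique: its clique would be
  contained in one through a sibling, and both are maximal cliques at different positions of the
  distinct list of cliques.\<close>
lemma labels_P_child_nonempty:
  assumes p: "sub t p = PN S cs" and "j < length cs" and "j' < length cs" and "j \<noteq> j'"
  shows "labels (cs ! j) \<noteq> {}"
proof
  assume empty: "labels (cs ! j) = {}"
  have "sub t (p @ [m]) = cs ! m" if "m < length cs" for m
    using p that by (simp add: sub_append)
  then have "wf_mpq (cs ! j)" "wf_mpq (cs ! j')"
    using wf_mpq_sub[OF wf_mpq] assms(2,3) by metis+
  moreover have "cs ! j \<noteq> Empty" "cs ! j' \<noteq> Empty"
    using wf_mpq_PN_child wf_mpq_sub[OF wf_mpq, of p] p assms(2,3) by metis+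
  ultimately obtain P D P' D' where "clique_path (cs ! j) P D" "clique_path (cs ! j') P' D'"
    using wf_mpq_clique_path_exists by metis
  then have D: "D \<in> set (cliques (cs ! j))" "D' \<in> set (cliques (cs ! j'))" and "D = {}"
    using clique_path_in_cliques clique_path_labels empty by blast+
  have "sub t p \<noteq> Empty" using p by simp
  then obtain A us vs where decomp: "cliques t = us @ map ((\<union>) A) (cliques (sub t p)) @ vs"
    using cliques_sub_infix by blast
  let ?f = "\<lambda>c. map ((\<union>) A) (map ((\<union>) S) (cliques c))"
  have cliques_p: "map ((\<union>) A) (cliques (sub t p)) = concat (map ?f cs)"
    using p assms(2) by (auto simp: map_concat comp_def)
  have max: "max_clique V E (A \<union> (S \<union> Z))"
    if "m < length cs" and "Z \<in> set (cliques (cs ! m))" for m Z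
  proof -
    from that have "A \<union> (S \<union> Z) \<in> set (concat (map ?f cs))" by force
    then have "A \<union> (S \<union> Z) \<in> set (map ((\<union>) A) (cliques (sub t p)))"
      by (simp only: cliques_p)
    then have "A \<union> (S \<union> Z) \<in> set (cliques t)" unfolding decomp by simp
    then show ?thesis using set_cliques by blast
  qed
  have "A \<union> (S \<union> D) = A \<union> (S \<union> D')"
    using max[OF assms(2) D(1)] max[OF assms(3) D(2)] \<open>D = {}\<close> unfolding max_clique_def by blast
  then have "A \<union> (S \<union> D) \<in> set (?f (cs ! j)) \<inter> set (?f (cs ! j'))" using D by auto
  moreover have "distinct (concat (map ?f cs))" using distinct_cliques decomp cliques_p by simp
  ultimately show False using distinct_concat_map_disjoint assms(2-4) by blast
qed

lemma labels_child_occurs: "v \<in> labels (child (sub t p) j) \<Longrightarrow> \<exists>q. occurs t v (p @ j # q)"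
  using labels_occurs occurs_append by fastforce

lemma P_node_branching:
  assumes p: "sub t p = PN S cs" and "cs \<noteq> []"
  shows "\<exists>r i j qa qb a b.
    i \<noteq> j \<and> occurs t a ((p @ r) @ i # qa) \<and> occurs t b ((p @ r) @ j # qb)"
proof (cases "length cs \<ge> 2")
  case True
  then have "0 < length cs" "1 < length cs" by auto
  then have "labels (child (sub t p) 0) \<noteq> {}" "labels (child (sub t p) 1) \<noteq> {}"
    using labels_P_child_nonempty[OF p _ _ zero_neq_one]
      labels_P_child_nonempty[OF p _ _ one_neq_zero] p by auto
  then obtain a b qa qb where "occurs t a (p @ 0 # qa)" "occurs t b (p @ 1 # qb)"
    using labels_child_occurs by (metis equals0I)
  then have "occurs t a ((p @ []) @ 0 # qa) \<and> occurs t b ((p @ []) @ 1 # qb)" by simp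
  then show ?thesis using zero_neq_one by blast
next
  case False
  with assms(2) obtain c where "cs = [c]" by (cases cs) (auto simp: Suc_le_eq)
  moreover have "P_conditions S cs" using P_conditions_sub p .
  ultimately obtain secs where c: "c = QN secs" unfolding P_conditions_def is_PN_def by (cases c) auto
  let ?k = "length secs"
  have pq: "sub t (p @ [0]) = QN secs" using p \<open>cs = [c]\<close> c by (simp add: sub_append)
  then have "Q_conditions secs" using Q_conditions_sub by blast
  then have "?k \<ge> 3" "labels (child (sub t (p @ [0])) 0) \<noteq> {}"
    "labels (child (sub t (p @ [0])) (?k - 1)) \<noteq> {}"
    using pq unfolding Q_conditions_def Let_def by auto
  then obtain a b qa qb where
    "occurs t a ((p @ [0]) @ 0 # qa)" "occurs t b ((p @ [0]) @ (?k - 1) # qb)"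
    using labels_child_occurs by (metis equals0I)
  moreover have "0 \<noteq> ?k - 1" using \<open>?k \<ge> 3\<close> by simp
  ultimately show ?thesis by blast
qed

end

theorem mainTheorem10:
  fixes n :: nat and E :: "nat set set" and t :: mpq and x y :: nat
    and S :: "nat set" and cs :: "mpq list"
  assumes "interval_graph {1..n} E"
    and "is_MPQ_tree {1..n} E t"
    and "{x, y} \<in> E"
    and "over t x y"
    and "node t x \<noteq> node t y"
    and "sub t (node t y) = PN S cs"
    and "cs \<noteq> []"
  shows "\<not> interval_edge {1..n} E x y"
proof
  let ?V = "{1..n}"
  assume "interval_edge ?V E x y"
  then have G': "interval_graph ?V (E - {{x, y}})" unfolding interval_edge_def by blast
  interpret mpq_tree ?V E t by unfold_locales (fact assms(2), simp)
  have xy: "x \<in> ?V" "y \<in> ?V" "x \<noteq> y"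
    using simple_graph_edge assms(1,3) unfolding interval_graph_def by blast+
  from assms(4,5) obtain i q where over: "node t y = node t x @ i # q"
    unfolding over_def by (metis append.right_neutral neq_Nil_conv)
  from P_node_branching[OF assms(6,7)] obtain r ja jb qa qb a b where
    "ja \<noteq> jb" and
    ab: "occurs t a ((node t y @ r) @ ja # qa)" "occurs t b ((node t y @ r) @ jb # qb)"
    by blast
  have a: "a \<in> ?V" "node t a = node t y @ r @ ja # qa" "{a, x} \<in> E" "{a, y} \<in> E"
    using common_neighbour_below_P_node[OF xy assms(3) over assms(6), of a "r @ ja # qa"] ab(1)
    by simp_all
  have b: "b \<in> ?V" "node t b = node t y @ r @ jb # qb" "{b, x} \<in> E" "{b, y} \<in> E"
    using common_neighbour_below_P_node[OF xy assms(3) over assms(6), of b "r @ jb # qb"] ab(2)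
    by simp_all
  have "a \<noteq> x" "a \<noteq> y" "b \<noteq> x" "b \<noteq> y" using a(2) b(2) over by auto
  have "{a, b} \<notin> E" "a \<noteq> b"
    using nonadjacent_below_distinct_children[of a b "node t y @ r"] a(1,2) b(1,2) \<open>ja \<noteq> jb\<close>
    by auto
  then show False
    using interval_graph_no_induced_C4[OF G' a(1) b(1) xy(1,2)] a b xy
      \<open>a \<noteq> x\<close> \<open>a \<noteq> y\<close> \<open>b \<noteq> x\<close> \<open>b \<noteq> y\<close> by (auto simp: doubleton_eq_iff)
qed

end
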